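(* Let $\theta\in(0,1)$ and $\delta>0$ with $\theta+\delta<1$, and for $\lambda>0$ set $\varphi_0(x)=e^{\lambda(x-\theta)^2}$. For a sufficiently large fixed constant $\lambda>0$, there exist constants $s_0>0$ and $C>0$ such that $$s\int_{\theta+\delta}^1|f(x)|^2e^{2s\varphi_0(x)}\,dx\le C\int_{\theta+\delta}^1|f'(x)|^2e^{2s\varphi_0(x)}\,dx$$ for all $s\ge s_0$ and all $f\in H^1(\theta+\delta,1)$ with $f(1)=0$. *)

theory Defs
  imports "HOL-Analysis.Analysis"
begin

text \<open>Sobolev space H^1(a,b) on a bounded interval, via the continuous representative:
  f is in H^1(a,b) with weak derivative g iff g is in L^2(a,b) and
  f x = f a + integral of g over [a,x] for all x in [a,b].\<close>
definition H1_with_deriv :: "real \<Rightarrow> real \<Rightarrow> (real \<Rightarrow> complex) \<Rightarrow> (real \<Rightarrow> complex) \<Rightarrow> bool" where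
  "H1_with_deriv a b f g \<longleftrightarrow>
     g integrable_on {a..b} \<and>
     (\<lambda>x. (norm (g x))\<^sup>2) integrable_on {a..b} \<and>
     (\<forall>x\<in>{a..b}. (g has_integral (f x - f a)) {a..x})"

definition phi0 :: "real \<Rightarrow> real \<Rightarrow> real \<Rightarrow> real" where
  "phi0 lam \<theta> x = exp (lam * (x - \<theta>)\<^sup>2)"

end

theory Submission
  imports Defs
begin

text \<open>Since \<open>f 1 = 0\<close>, \<open>f x = - \<integral>\<^sub>x\<^sup>1 g\<close>. If the exponent \<open>\<psi>\<close> of the weight grows at least with
  slope \<open>k\<close>, then \<open>\<integral>\<^sub>x\<^sup>1 exp (- \<psi>) \<le> exp (- \<psi> x) / k\<close>, and Cauchy-Schwarz with weight \<open>exp \<psi>\<close>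
  gives the pointwise bound \<open>|f x|\<^sup>2 exp (\<psi> x) \<le> (\<integral> |g|\<^sup>2 exp \<psi>) / k\<close>; integrating it over
  \<open>[a, 1]\<close> costs a factor \<open>1 - a\<close>. For \<open>\<psi> = 2 s \<phi>\<^sub>0\<close> on \<open>[\<theta> + \<delta>, 1]\<close> the slope is \<open>k = 4 s \<lambda> \<delta>\<close>,
  whose factor \<open>s\<close> cancels the \<open>s\<close> on the left: every \<open>\<lambda>, s > 0\<close> works, with
  \<open>C = (1 - \<theta> - \<delta>) / (4 \<lambda> \<delta>)\<close>.\<close>

lemma square_le_mult_if_forall_eps:
  fixes y A B :: real
  assumes "0 \<le> y" "0 \<le> A" "0 \<le> B"
    and bound: "\<And>\<epsilon>. 0 < \<epsilon> \<Longrightarrow> y \<le> (\<epsilon> * A + B / \<epsilon>) / 2"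
  shows "y\<^sup>2 \<le> A * B"
proof (cases "y = 0")
  case False
  then have y: "0 < y" using assms(1) by simp
  show ?thesis
  proof (cases "B = 0")
    case True
    have "y \<le> (y / (A + 1) * A) / 2" using bound[of "y / (A + 1)"] y assms(2) True by simp
    also have "\<dots> < y"
      using y assms(2) by (simp add: field_simps add_nonneg_pos)
    finally show ?thesis by simp
  next
    case False
    then have "y \<le> (B / y * A + y) / 2" using bound[of "B / y"] y assms(3) by simp
    then have "y * y \<le> A * B" using y by (simp add: field_simps)
    then show ?thesis by (simp add: power2_eq_square)
  qed
qed (use assms in simp)

lemma le_weighted_amgm:
  fixes n u \<epsilon> :: real
  assumes "0 < u" "0 < \<epsilon>"
  shows "n \<le> \<epsilon> / 2 * (n\<^sup>2 * u) + 1 / (2 * \<epsilon>) * (1 / u)"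
proof -
  have "0 \<le> (\<epsilon> * u * n - 1)\<^sup>2 / (2 * \<epsilon> * u)" using assms by simp
  also have "\<dots> = \<epsilon> / 2 * (n\<^sup>2 * u) + 1 / (2 * \<epsilon>) * (1 / u) - n"
    using assms by (simp add: field_simps power2_eq_square)
  finally show ?thesis by simp
qed

text \<open>Cauchy-Schwarz by integrating the pointwise AM-GM bound and optimising over \<open>\<epsilon>\<close>.\<close>

lemma norm_integral_square_le_weighted:
  fixes g :: "'n::euclidean_space \<Rightarrow> 'a::banach" and w :: "'n \<Rightarrow> real"
  assumes g: "g integrable_on S"
    and gw: "(\<lambda>t. (norm (g t))\<^sup>2 * w t) integrable_on S"
    and w_inv: "(\<lambda>t. 1 / w t) integrable_on S"
    and w_pos: "\<And>t. t \<in> S \<Longrightarrow> 0 < w t"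
  shows "(norm (integral S g))\<^sup>2
           \<le> integral S (\<lambda>t. (norm (g t))\<^sup>2 * w t) * integral S (\<lambda>t. 1 / w t)"
proof (rule square_le_mult_if_forall_eps)
  show "0 \<le> integral S (\<lambda>t. (norm (g t))\<^sup>2 * w t)"
    using gw w_pos by (intro integral_nonneg) (simp_all add: less_imp_le)
  show "0 \<le> integral S (\<lambda>t. 1 / w t)"
    using w_inv w_pos by (intro integral_nonneg) (auto intro: less_imp_le)
  fix \<epsilon> :: real assume \<epsilon>: "0 < \<epsilon>"
  have gw\<epsilon>: "(\<lambda>t. \<epsilon> / 2 * ((norm (g t))\<^sup>2 * w t)) integrable_on S"
    using gw by (rule integrable_on_mult_right)
  have w\<epsilon>: "(\<lambda>t. 1 / (2 * \<epsilon>) * (1 / w t)) integrable_on S"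
    using w_inv by (rule integrable_on_mult_right)
  have "norm (integral S g)
          \<le> integral S (\<lambda>t. \<epsilon> / 2 * ((norm (g t))\<^sup>2 * w t) + 1 / (2 * \<epsilon>) * (1 / w t))"
    using le_weighted_amgm[OF w_pos \<epsilon>]
    by (intro integral_norm_bound_integral g integrable_add gw\<epsilon> w\<epsilon>)
  also have "\<dots> = \<epsilon> / 2 * integral S (\<lambda>t. (norm (g t))\<^sup>2 * w t)
                    + 1 / (2 * \<epsilon>) * integral S (\<lambda>t. 1 / w t)"
    by (simp only: integral_add[OF gw\<epsilon> w\<epsilon>] integral_mult_right)
  finally show "norm (integral S g) \<le> (\<epsilon> * integral S (\<lambda>t. (norm (g t))\<^sup>2 * w t)
                    + integral S (\<lambda>t. 1 / w t) / \<epsilon>) / 2"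
    by (simp add: field_simps)
qed simp

lemma integral_exp_neg_le_if_linear_growth:
  fixes \<psi> :: "real \<Rightarrow> real"
  assumes k: "0 < k" and "x \<le> b" and "continuous_on {x..b} \<psi>"
    and growth: "\<And>t. t \<in> {x..b} \<Longrightarrow> \<psi> x + k * (t - x) \<le> \<psi> t"
  shows "integral {x..b} (\<lambda>t. exp (- \<psi> t)) \<le> exp (- \<psi> x) / k"
proof -
  have "((\<lambda>t. exp (- \<psi> x - k * (t - x))) has_integral
          (- exp (- \<psi> x - k * (b - x)) / k) - (- exp (- \<psi> x - k * (x - x)) / k)) {x..b}"
    apply (rule fundamental_theorem_of_calculus[OF \<open>x \<le> b\<close>])
    unfolding has_real_derivative_iff_has_vector_derivative[symmetric]
    using k by (auto intro!: derivative_eq_intros)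
  then have majorant: "((\<lambda>t. exp (- \<psi> x - k * (t - x))) has_integral
          (exp (- \<psi> x) - exp (- \<psi> x - k * (b - x))) / k) {x..b}"
    by (simp add: diff_divide_distrib)
  have "integral {x..b} (\<lambda>t. exp (- \<psi> t)) \<le> (exp (- \<psi> x) - exp (- \<psi> x - k * (b - x))) / k"
  proof (rule has_integral_le[OF integrable_integral majorant])
    show "(\<lambda>t. exp (- \<psi> t)) integrable_on {x..b}"
      using assms(3) by (intro integrable_continuous_interval continuous_intros)
    show "exp (- \<psi> t) \<le> exp (- \<psi> x - k * (t - x))" if "t \<in> {x..b}" for t
      using growth[OF that] by simp
  qed
  also have "\<dots> \<le> exp (- \<psi> x) / k"
    using k by (simp add: divide_right_mono)
  finally show ?thesis .
qed

lemma H1_with_deriv_integral: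
  assumes "H1_with_deriv a b f g" "x \<in> {a..b}"
  shows "integral {a..x} g = f x - f a"
  using assms unfolding H1_with_deriv_def by (blast intro: integral_unique)

lemma H1_with_deriv_eq_neg_integral:
  assumes H1: "H1_with_deriv a b f g" and "f b = 0" "x \<in> {a..b}"
  shows "f x = - integral {x..b} g"
proof -
  have "integral {a..x} g + integral {x..b} g = integral {a..b} g"
    using H1 \<open>x \<in> {a..b}\<close> unfolding H1_with_deriv_def
    by (intro Henstock_Kurzweil_Integration.integral_combine) auto
  then show ?thesis
    using H1_with_deriv_integral[OF H1] \<open>f b = 0\<close> \<open>x \<in> {a..b}\<close>
    by (auto simp: eq_neg_iff_add_eq_0)
qed

lemma H1_with_deriv_continuous_on:
  assumes "H1_with_deriv a b f g"
  shows "continuous_on {a..b} f"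
proof (rule continuous_on_eq)
  show "continuous_on {a..b} (\<lambda>x. f a + integral {a..x} g)"
    using assms unfolding H1_with_deriv_def
    by (intro continuous_intros indefinite_integral_continuous_1) auto
  show "f a + integral {a..x} g = f x" if "x \<in> {a..b}" for x
    using H1_with_deriv_integral[OF assms that] by simp
qed

lemma integrable_on_mult_continuous_nonneg:
  fixes h w :: "real \<Rightarrow> real"
  assumes "h integrable_on {a..b}" "\<And>x. x \<in> {a..b} \<Longrightarrow> 0 \<le> h x" "continuous_on {a..b} w"
  shows "(\<lambda>x. h x * w x) integrable_on {a..b}"
proof -
  have "(\<lambda>x. w x * h x) absolutely_integrable_on {a..b}"
  proof (rule absolutely_integrable_bounded_measurable_product_real)
    show "w \<in> borel_measurable (lebesgue_on {a..b})"
      using assms(3) by (intro continuous_imp_measurable_on_sets_lebesgue) auto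
    show "bounded (w ` {a..b})"
      using assms(3) by (intro compact_imp_bounded compact_continuous_image) auto
    show "h absolutely_integrable_on {a..b}"
      using assms(1,2) by (rule nonnegative_absolutely_integrable_1)
  qed simp
  then show ?thesis by (simp add: absolutely_integrable_on_def mult.commute)
qed

lemma H1_with_deriv_weighted_pointwise_bound:
  fixes \<psi> :: "real \<Rightarrow> real"
  assumes H1: "H1_with_deriv a b f g" and "f b = 0" and k: "0 < k" and \<psi>: "continuous_on {a..b} \<psi>"
    and growth: "\<And>x t. a \<le> x \<Longrightarrow> x \<le> t \<Longrightarrow> t \<le> b \<Longrightarrow> \<psi> x + k * (t - x) \<le> \<psi> t"
    and x: "x \<in> {a..b}"
  shows "(norm (f x))\<^sup>2 * exp (\<psi> x) \<le> integral {a..b} (\<lambda>t. (norm (g t))\<^sup>2 * exp (\<psi> t)) / k"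
proof -
  define G where "G = integral {a..b} (\<lambda>t. (norm (g t))\<^sup>2 * exp (\<psi> t))"
  have sub: "{x..b} \<subseteq> {a..b}" using x by auto
  have g: "g integrable_on {a..b}" and g2: "(\<lambda>t. (norm (g t))\<^sup>2) integrable_on {a..b}"
    using H1 unfolding H1_with_deriv_def by auto
  have gw: "(\<lambda>t. (norm (g t))\<^sup>2 * exp (\<psi> t)) integrable_on {a..b}"
    using g2 \<psi> by (intro integrable_on_mult_continuous_nonneg continuous_intros) auto
  have gw_tail: "(\<lambda>t. (norm (g t))\<^sup>2 * exp (\<psi> t)) integrable_on {x..b}"
    using integrable_subinterval_real[OF gw sub] .
  have \<psi>_tail: "continuous_on {x..b} \<psi>"
    using continuous_on_subset[OF \<psi> sub] .
  have inv_tail: "(\<lambda>t. 1 / exp (\<psi> t)) integrable_on {x..b}"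
    using \<psi>_tail by (intro integrable_continuous_interval continuous_intros) auto
  have "(norm (f x))\<^sup>2 = (norm (integral {x..b} g))\<^sup>2"
    using H1_with_deriv_eq_neg_integral[OF H1 \<open>f b = 0\<close> x] by simp
  also have "\<dots> \<le> integral {x..b} (\<lambda>t. (norm (g t))\<^sup>2 * exp (\<psi> t))
                   * integral {x..b} (\<lambda>t. 1 / exp (\<psi> t))"
    using sub by (intro norm_integral_square_le_weighted integrable_subinterval_real[OF g]
        gw_tail inv_tail) auto
  also have "\<dots> \<le> G * (exp (- \<psi> x) / k)"
  proof (rule mult_mono)
    show "integral {x..b} (\<lambda>t. (norm (g t))\<^sup>2 * exp (\<psi> t)) \<le> G"
      unfolding G_def using sub gw_tail gw by (intro integral_subset_le) auto
    show "integral {x..b} (\<lambda>t. 1 / exp (\<psi> t)) \<le> exp (- \<psi> x) / k"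
      using integral_exp_neg_le_if_linear_growth[OF k _ \<psi>_tail] x growth
      by (simp add: exp_minus inverse_eq_divide)
    show "0 \<le> G"
      unfolding G_def using gw by (intro integral_nonneg) auto
    show "0 \<le> integral {x..b} (\<lambda>t. 1 / exp (\<psi> t))"
      using inv_tail by (intro integral_nonneg) auto
  qed
  finally have "(norm (f x))\<^sup>2 * exp (\<psi> x) \<le> G * (exp (- \<psi> x) / k) * exp (\<psi> x)"
    by (rule mult_right_mono) simp
  also have "\<dots> = G / k"
    by (simp add: exp_minus)
  finally show ?thesis
    unfolding G_def .
qed

lemma H1_with_deriv_weighted_Poincare:
  fixes \<psi> :: "real \<Rightarrow> real"
  assumes H1: "H1_with_deriv a b f g" and "f b = 0" and k: "0 < k" and \<psi>: "continuous_on {a..b} \<psi>"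
    and growth: "\<And>x t. a \<le> x \<Longrightarrow> x \<le> t \<Longrightarrow> t \<le> b \<Longrightarrow> \<psi> x + k * (t - x) \<le> \<psi> t"
    and "a \<le> b"
  shows "integral {a..b} (\<lambda>x. (norm (f x))\<^sup>2 * exp (\<psi> x))
           \<le> (b - a) / k * integral {a..b} (\<lambda>t. (norm (g t))\<^sup>2 * exp (\<psi> t))"
proof -
  have "integral {a..b} (\<lambda>x. (norm (f x))\<^sup>2 * exp (\<psi> x))
          \<le> integral {a..b} (\<lambda>x. integral {a..b} (\<lambda>t. (norm (g t))\<^sup>2 * exp (\<psi> t)) / k)"
    using H1_with_deriv_continuous_on[OF H1] \<psi>
      H1_with_deriv_weighted_pointwise_bound[OF assms(1-5)]
    by (intro integral_le integrable_continuous_interval continuous_intros) auto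
  then show ?thesis
    using \<open>a \<le> b\<close> by simp
qed

lemma diff_le_exp_diff:
  fixes p q :: real
  assumes "0 \<le> p" "p \<le> q"
  shows "q - p \<le> exp q - exp p"
proof -
  have "q - p \<le> exp p * (q - p)"
    using assms mult_right_mono[of 1 "exp p" "q - p"] by simp
  also have "\<dots> \<le> exp p * (exp (q - p) - 1)"
    by (intro mult_left_mono) (use exp_ge_add_one_self[of "q - p"] in \<open>linarith, simp\<close>)
  also have "\<dots> = exp q - exp p"
    by (simp add: exp_diff algebra_simps)
  finally show ?thesis .
qed

lemma phi0_linear_growth:
  assumes "0 \<le> lam" "0 \<le> \<delta>" "\<theta> + \<delta> \<le> x" "x \<le> t"
  shows "phi0 lam \<theta> x + 2 * lam * \<delta> * (t - x) \<le> phi0 lam \<theta> t"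
proof -
  have "2 * \<delta> * (t - x) = (t - x) * (2 * \<delta>)"
    by simp
  also have "\<dots> \<le> (t - x) * (t + x - 2 * \<theta>)"
    using assms by (intro mult_left_mono) auto
  also have "\<dots> = (t - \<theta>)\<^sup>2 - (x - \<theta>)\<^sup>2"
    by (simp add: power2_eq_square algebra_simps)
  finally have "2 * \<delta> * (t - x) \<le> (t - \<theta>)\<^sup>2 - (x - \<theta>)\<^sup>2" .
  from mult_left_mono[OF this \<open>0 \<le> lam\<close>]
  have "2 * lam * \<delta> * (t - x) \<le> lam * (t - \<theta>)\<^sup>2 - lam * (x - \<theta>)\<^sup>2"
    by (simp add: algebra_simps)
  also have "\<dots> \<le> phi0 lam \<theta> t - phi0 lam \<theta> x"
    unfolding phi0_def using assms by (intro diff_le_exp_diff mult_left_mono power_mono) auto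
  finally show ?thesis
    by simp
qed

lemma H1_with_deriv_phi0_weighted_Poincare:
  assumes "0 < lam" "0 < s" "0 < \<delta>" "\<theta> + \<delta> \<le> 1"
    and H1: "H1_with_deriv (\<theta> + \<delta>) 1 f g" "f 1 = 0"
  shows "s * integral {\<theta> + \<delta>..1} (\<lambda>x. (norm (f x))\<^sup>2 * exp (2 * s * phi0 lam \<theta> x))
           \<le> (1 - (\<theta> + \<delta>)) / (4 * lam * \<delta>)
             * integral {\<theta> + \<delta>..1} (\<lambda>x. (norm (g x))\<^sup>2 * exp (2 * s * phi0 lam \<theta> x))"
proof -
  let ?k = "4 * s * lam * \<delta>"
  have growth: "2 * s * phi0 lam \<theta> x + ?k * (t - x) \<le> 2 * s * phi0 lam \<theta> t"
    if "\<theta> + \<delta> \<le> x" "x \<le> t" for x t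
    using mult_left_mono[OF phi0_linear_growth[of lam \<delta> \<theta> x t], of "2 * s"] that assms
    by (simp add: algebra_simps)
  have "0 < ?k"
    using assms by simp
  moreover have "continuous_on {\<theta> + \<delta>..1} (\<lambda>x. 2 * s * phi0 lam \<theta> x)"
    unfolding phi0_def by (intro continuous_intros)
  ultimately have "s * integral {\<theta> + \<delta>..1} (\<lambda>x. (norm (f x))\<^sup>2 * exp (2 * s * phi0 lam \<theta> x))
      \<le> s * ((1 - (\<theta> + \<delta>)) / ?k
            * integral {\<theta> + \<delta>..1} (\<lambda>x. (norm (g x))\<^sup>2 * exp (2 * s * phi0 lam \<theta> x)))"
    using H1_with_deriv_weighted_Poincare[OF H1, of ?k] growth assms
    by (intro mult_left_mono) auto
  also have "\<dots> = (1 - (\<theta> + \<delta>)) / (4 * lam * \<delta>)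
      * integral {\<theta> + \<delta>..1} (\<lambda>x. (norm (g x))\<^sup>2 * exp (2 * s * phi0 lam \<theta> x))"
    using assms by (simp add: field_simps)
  finally show ?thesis .
qed

theorem lemma4p12:
  fixes \<theta> \<delta> :: real
  assumes "0 < \<theta>" "\<theta> < 1" "0 < \<delta>" "\<theta> + \<delta> < 1"
  shows "\<exists>lam0>0. \<forall>lam\<ge>lam0. \<exists>s0>0. \<exists>C>0. \<forall>s\<ge>s0. \<forall>f g.
           H1_with_deriv (\<theta> + \<delta>) 1 f g \<and> f 1 = 0 \<longrightarrow>
           s * integral {\<theta> + \<delta>..1} (\<lambda>x. (norm (f x))\<^sup>2 * exp (2 * s * phi0 lam \<theta> x))
             \<le> C * integral {\<theta> + \<delta>..1} (\<lambda>x. (norm (g x))\<^sup>2 * exp (2 * s * phi0 lam \<theta> x))"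
proof -
  have "0 < (1 - (\<theta> + \<delta>)) / (4 * lam * \<delta>)" if "1 \<le> lam" for lam
    using that assms by simp
  moreover have "s * integral {\<theta> + \<delta>..1} (\<lambda>x. (norm (f x))\<^sup>2 * exp (2 * s * phi0 lam \<theta> x))
      \<le> (1 - (\<theta> + \<delta>)) / (4 * lam * \<delta>)
        * integral {\<theta> + \<delta>..1} (\<lambda>x. (norm (g x))\<^sup>2 * exp (2 * s * phi0 lam \<theta> x))"
    if "1 \<le> lam" "1 \<le> s" "H1_with_deriv (\<theta> + \<delta>) 1 f g" "f 1 = 0" for lam s f g
    using that assms by (intro H1_with_deriv_phi0_weighted_Poincare) auto
  ultimately show ?thesis
    using zero_less_one by blast
qed

end
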